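(* Let $n\ge 2$ be an integer and let $A$ be an uncountable compact subset of $(L_n,\tau_E|_{L_n})$. Then $(X_n,\tau(A))$ is perfect but not Lindelöf, and likewise $(X_n,\tau(L_n\setminus A))$ is perfect but not Lindelöf.
   Context: For $\overline{x},\overline{a}\in\mathbb R^n$ let $|\overline{x}-\overline{a}|$ be the Euclidean distance and $B(\overline{a},\epsilon)=\{\overline{x}\in\mathbb R^n:|\overline{x}-\overline{a}|<\epsilon\}$. Let $P_n=\{\overline{x}\in\mathbb R^n: x_n>0\}$, $L_n=\{\overline{x}\in\mathbb R^n: x_n=0\}$, $X_n=P_n\cup L_n$, and let $\tau_E$ denote the Euclidean topology on $X_n$. For $\overline{a}\in L_n$ and $\epsilon>0$ put $\overline{a(\epsilon)}=(a_1,\dots,a_{n-1},\epsilon)$ and $\tilde B(\overline{a},\epsilon)=\{\overline{a}\}\cup B(\overline{a(\epsilon)},\epsilon)$. For $A\subseteq L_n$, the topology $\tau(A)$ on $X_n$ is generated by the local bases: at $\overline{a}\in P_n$, the sets $B(\overline{a},\epsilon)$ with $0<\epsilon<a_n$; at $\overline{a}\in A$, the sets $B(\overline{a},\epsilon)\cap X_n$ with $\epsilon>0$; at $\overline{a}\in L_n\setminus A$, the sets $\tilde B(\overline{a},\epsilon)$ with $\epsilon>0$. A space is perfect if every closed set is a $G_\delta$-set. *)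

theory Defs
  imports "HOL-Analysis.Analysis"
begin

text \<open>Points of R^n (n = CARD('m) + 1) are represented as pairs (a, t) with
  a in R^(n-1) and t the last coordinate; the product metric is Euclidean.\<close>

definition Xn :: "((real^'m) \<times> real) set" where
  "Xn = {p. snd p \<ge> 0}"

definition Pn :: "((real^'m) \<times> real) set" where
  "Pn = {p. snd p > 0}"

definition Ln :: "((real^'m) \<times> real) set" where
  "Ln = {p. snd p = 0}"

definition local_base :: "((real^'m) \<times> real) set \<Rightarrow> ((real^'m) \<times> real) \<Rightarrow> ((real^'m) \<times> real) set set" where
  "local_base A p =
     (if p \<in> Pn then {ball p e | e. 0 < e \<and> e < snd p}
      else if p \<in> A then {ball p e \<inter> Xn | e. 0 < e}
      else {insert p (ball (fst p, e) e) | e. 0 < e})"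

definition tau :: "((real^'m) \<times> real) set \<Rightarrow> ((real^'m) \<times> real) topology" where
  "tau A = topology (\<lambda>U. U \<subseteq> Xn \<and> (\<forall>p\<in>U. \<exists>B\<in>local_base A p. B \<subseteq> U))"

definition perfect_top :: "'a topology \<Rightarrow> bool" where
  "perfect_top X \<longleftrightarrow> (\<forall>C. closedin X C \<longrightarrow> gdelta_in X C)"

end

theory Submission
  imports Defs
begin

text \<open>
  Off \<open>Ln - B\<close> the basic neighbourhoods of \<open>\<tau>(B)\<close> are Euclidean balls or half-balls, while a
  point \<open>q \<in> Ln - B\<close> has the neighbourhoods formed by \<open>q\<close> and an open ball tangent to \<open>Ln\<close>
  at \<open>q\<close>; they meet \<open>Ln\<close> only in \<open>q\<close>. Hence every Euclidean-closed \<open>F \<subseteq> Ln - B\<close> is closed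
  and discrete in \<open>\<tau>(B)\<close>.

  If \<open>Ln - B\<close> is a Euclidean \<open>F\<^sub>\<sigma>\<close>, the union of closed sets \<open>F\<^sub>k\<close>, then a \<open>\<tau>(B)\<close>-open
  set \<open>U\<close> is the union of \<open>V \<inter> Xn\<close>, where \<open>V\<close> is the union of all Euclidean balls whose
  trace on \<open>Xn\<close> lies in \<open>U\<close>, and of the closed sets \<open>U \<inter> F\<^sub>k\<close>. As \<open>V\<close> is Euclidean open,
  \<open>V \<inter> Xn\<close> is \<open>F\<^sub>\<sigma>\<close> too, so every open set is \<open>F\<^sub>\<sigma>\<close> and \<open>\<tau>(B)\<close> is perfect. If \<open>Ln - B\<close>
  is moreover uncountable, some \<open>F\<^sub>k\<close> is an uncountable closed discrete set, which no
  Lindelof space contains.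

  Both \<open>B = A\<close> and \<open>B = Ln - A\<close> qualify: \<open>Ln - A = Ln \<inter> -A\<close> is \<open>F\<^sub>\<sigma>\<close> and, \<open>A\<close> being
  bounded, uncountable; \<open>Ln - (Ln - A) = A\<close> is closed and uncountable.
\<close>

lemma istopology_neighbourhood_base:
  assumes directed: "\<And>p W1 W2. p \<in> S \<Longrightarrow> W1 \<in> N p \<Longrightarrow> W2 \<in> N p \<Longrightarrow> \<exists>W\<in>N p. W \<subseteq> W1 \<inter> W2"
  shows "istopology (\<lambda>U. U \<subseteq> S \<and> (\<forall>p\<in>U. \<exists>W\<in>N p. W \<subseteq> U))"
proof -
  let ?open = "\<lambda>U. U \<subseteq> S \<and> (\<forall>p\<in>U. \<exists>W\<in>N p. W \<subseteq> U)"
  have "?open (U \<inter> V)" if U: "?open U" and V: "?open V" for U V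
  proof -
    have "\<exists>W\<in>N p. W \<subseteq> U \<inter> V" if p: "p \<in> U \<inter> V" for p
    proof -
      from U p obtain W1 where W1: "W1 \<in> N p" "W1 \<subseteq> U" by blast
      from V p obtain W2 where W2: "W2 \<in> N p" "W2 \<subseteq> V" by blast
      from U p have "p \<in> S" by blast
      then obtain W where "W \<in> N p" "W \<subseteq> W1 \<inter> W2"
        using directed W1(1) W2(1) by blast
      with W1(2) W2(2) show ?thesis by blast
    qed
    with U show ?thesis by auto
  qed
  moreover have "?open (\<Union>\<K>)" if "\<forall>U\<in>\<K>. ?open U" for \<K>
    using that by (meson Union_least Union_upper UnionE order_trans)
  ultimately show ?thesis
    unfolding istopology_def by blast
qed

lemma Lindelof_space_closed_discrete_countable:
  assumes "Lindelof_space X" "closedin X D"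
    and discrete: "\<And>x. x \<in> D \<Longrightarrow> \<exists>U. openin X U \<and> U \<inter> D = {x}"
  shows "countable D"
proof -
  have D: "D \<subseteq> topspace X"
    using assms(2) by (rule closedin_subset)
  have L: "Lindelof_space (subtopology X D)"
    using assms(1,2) by (rule Lindelof_space_closedin_subtopology)
  have "openin (subtopology X D) {x}" if x: "x \<in> D" for x
  proof -
    obtain U where "openin X U" "U \<inter> D = {x}" using discrete[OF x] by blast
    then show ?thesis unfolding openin_subtopology by blast
  qed
  then have "\<And>U. U \<in> (\<lambda>x. {x}) ` D \<Longrightarrow> openin (subtopology X D) U" by blast
  moreover have "\<Union>((\<lambda>x. {x}) ` D) = topspace (subtopology X D)"
    using D by (simp add: Int_absorb1)
  ultimately have "\<exists>\<V>. countable \<V> \<and> \<V> \<subseteq> (\<lambda>x. {x}) ` D \<and> \<Union>\<V> = topspace (subtopology X D)"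
    by (rule Lindelof_spaceD[OF L])
  then obtain \<V> where \<V>: "countable \<V>" "\<V> \<subseteq> (\<lambda>x. {x}) ` D" "\<Union>\<V> = topspace (subtopology X D)"
    by auto
  have "countable (\<Union>V\<in>\<V>. V)"
    using \<V>(1,2) by (intro countable_UN) auto
  with \<V>(3) D show ?thesis by (simp add: Int_absorb1)
qed

subsection \<open>Geometry of the half-space\<close>

lemma Pn_subset_Xn: "Pn \<subseteq> Xn"
  by (auto simp: Pn_def Xn_def)

lemma Ln_subset_Xn: "Ln \<subseteq> Xn"
  by (auto simp: Ln_def Xn_def)

lemma Pn_Int_Ln: "Pn \<inter> Ln = {}"
  by (auto simp: Pn_def Ln_def)

lemma Xn_eq_Pn_Un_Ln: "Xn = Pn \<union> Ln"
  by (auto simp: Xn_def Pn_def Ln_def)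

lemma closed_Ln: "closed (Ln :: ((real^'m) \<times> real) set)"
proof -
  have "closed (snd -` {0::real} :: ((real^'m) \<times> real) set)"
    by (intro closed_vimage continuous_intros)
  moreover have "(Ln :: ((real^'m) \<times> real) set) = snd -` {0}" by (auto simp: Ln_def)
  ultimately show ?thesis by simp
qed

lemma ball_subset_Pn: "e \<le> snd p \<Longrightarrow> ball p e \<subseteq> Pn"
proof
  fix x assume "e \<le> snd p" "x \<in> ball p e"
  moreover have "dist (snd p) (snd x) \<le> dist p x" by (rule dist_snd_le)
  ultimately show "x \<in> Pn" by (simp add: Pn_def dist_real_def)
qed

lemma tangent_ball_subset_Pn: "ball (a, e) e \<subseteq> Pn"
  by (rule ball_subset_Pn) simp

lemma tangent_ball_mono:
  assumes "e \<le> e'" shows "ball (a, e) e \<subseteq> ball (a, e') e'"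
proof
  fix x assume "x \<in> ball (a, e) e"
  moreover have "dist (a, e') x \<le> dist (a, e') (a, e) + dist (a, e) x" by (rule dist_triangle)
  moreover have "dist (a, e') (a, e) = e' - e" using assms by (simp add: dist_Pair_Pair dist_real_def)
  ultimately show "x \<in> ball (a, e') e'" by simp
qed

lemma tangent_ball_subset_ball: "0 \<le> e \<Longrightarrow> ball (a, e) e \<subseteq> ball (a, 0) (2 * e)"
proof
  fix x assume "0 \<le> e" "x \<in> ball (a, e) e"
  moreover have "dist (a, 0) x \<le> dist (a, 0) (a, e) + dist (a, e) x" by (rule dist_triangle)
  moreover have "dist (a, 0) (a, e) = e" using \<open>0 \<le> e\<close> by (simp add: dist_Pair_Pair dist_real_def)
  ultimately show "x \<in> ball (a, 0) (2 * e)" by simp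
qed

subsection \<open>The topology \<open>\<tau>(B)\<close>\<close>

lemma local_base_Pn: "p \<in> Pn \<Longrightarrow> local_base B p = {ball p e | e. 0 < e \<and> e < snd p}"
  by (simp add: local_base_def)

lemma local_base_mem: "p \<notin> Pn \<Longrightarrow> p \<in> B \<Longrightarrow> local_base B p = {ball p e \<inter> Xn | e. 0 < e}"
  by (simp add: local_base_def)

lemma local_base_not_mem:
  "p \<notin> Pn \<Longrightarrow> p \<notin> B \<Longrightarrow> local_base B p = {insert p (ball (fst p, e) e) | e. 0 < e}"
  by (simp add: local_base_def)

lemma local_base_Pn_ex_subset_Pn: "p \<in> Pn \<Longrightarrow> \<exists>W\<in>local_base B p. W \<subseteq> Pn"
proof -
  assume p: "p \<in> Pn"
  then have "0 < snd p / 2" "snd p / 2 < snd p" by (simp_all add: Pn_def)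
  with p have "ball p (snd p / 2) \<in> local_base B p" by (auto simp: local_base_Pn)
  moreover have "ball p (snd p / 2) \<subseteq> Pn"
    using \<open>snd p / 2 < snd p\<close> by (simp add: ball_subset_Pn)
  ultimately show ?thesis by blast
qed

lemma local_base_not_mem_ex_subset:
  "p \<notin> Pn \<Longrightarrow> p \<notin> B \<Longrightarrow> \<exists>W\<in>local_base B p. W \<subseteq> insert p Pn"
proof -
  assume "p \<notin> Pn" "p \<notin> B"
  then have "insert p (ball (fst p, 1) 1) \<in> local_base B p" by (auto simp: local_base_not_mem)
  moreover have "insert p (ball (fst p, 1) 1) \<subseteq> insert p Pn"
    using tangent_ball_subset_Pn by blast
  ultimately show ?thesis by blast
qed

lemma local_base_directed:
  assumes "W1 \<in> local_base B p" "W2 \<in> local_base B p"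
  shows "\<exists>W\<in>local_base B p. W \<subseteq> W1 \<inter> W2"
proof -
  consider "p \<in> Pn" | "p \<notin> Pn" "p \<in> B" | "p \<notin> Pn" "p \<notin> B" by blast
  then show ?thesis
  proof cases
    case 1
    with assms obtain e1 e2 where W: "W1 = ball p e1" "W2 = ball p e2" "0 < e1" "0 < e2" "e1 < snd p" "e2 < snd p"
      by (auto simp: local_base_Pn)
    then have "ball p (min e1 e2) \<in> local_base B p"
      using 1 by (simp add: local_base_Pn) (metis min_less_iff_disj min_def)
    moreover have "ball p (min e1 e2) \<subseteq> W1 \<inter> W2" using W by auto
    ultimately show ?thesis by blast
  next
    case 2
    with assms obtain e1 e2 where W: "W1 = ball p e1 \<inter> Xn" "W2 = ball p e2 \<inter> Xn" "0 < e1" "0 < e2"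
      by (auto simp: local_base_mem)
    then have "ball p (min e1 e2) \<inter> Xn \<in> local_base B p"
      using 2 by (simp add: local_base_mem) (metis min_def)
    moreover have "ball p (min e1 e2) \<inter> Xn \<subseteq> W1 \<inter> W2" using W by auto
    ultimately show ?thesis by blast
  next
    case 3
    with assms obtain e1 e2 where W: "W1 = insert p (ball (fst p, e1) e1)" "W2 = insert p (ball (fst p, e2) e2)"
      "0 < e1" "0 < e2"
      by (auto simp: local_base_not_mem)
    then have "insert p (ball (fst p, min e1 e2) (min e1 e2)) \<in> local_base B p"
      using 3 by (simp add: local_base_not_mem) (metis min_def)
    moreover have "insert p (ball (fst p, min e1 e2) (min e1 e2)) \<subseteq> W1 \<inter> W2"
      using W tangent_ball_mono[of "min e1 e2" e1 "fst p"] tangent_ball_mono[of "min e1 e2" e2 "fst p"] by auto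
    ultimately show ?thesis by blast
  qed
qed

lemma openin_tau: "openin (tau B) U \<longleftrightarrow> U \<subseteq> Xn \<and> (\<forall>p\<in>U. \<exists>W\<in>local_base B p. W \<subseteq> U)"
proof -
  have "istopology (\<lambda>U. U \<subseteq> Xn \<and> (\<forall>p\<in>U. \<exists>W\<in>local_base B p. W \<subseteq> U))"
    by (rule istopology_neighbourhood_base) (rule local_base_directed)
  then show ?thesis by (simp add: tau_def)
qed

lemma openin_tau_Int_Xn:
  assumes "open V" shows "openin (tau B) (V \<inter> Xn)"
  unfolding openin_tau
proof (intro conjI ballI)
  fix p assume p: "p \<in> V \<inter> Xn"
  with assms obtain e where e: "0 < e" "ball p e \<subseteq> V" by (meson IntD1 open_contains_ball)
  consider "p \<in> Pn" | "p \<notin> Pn" "p \<in> B" | "p \<notin> Pn" "p \<notin> B" by blast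
  then show "\<exists>W\<in>local_base B p. W \<subseteq> V \<inter> Xn"
  proof cases
    case 1
    define d where "d = min e (snd p / 2)"
    have "0 < d" "d < snd p" using 1 e by (auto simp: d_def Pn_def)
    then have "ball p d \<in> local_base B p" "ball p d \<subseteq> Xn"
      using 1 ball_subset_Pn[of d p] Pn_subset_Xn by (auto simp: local_base_Pn)
    moreover have "ball p d \<subseteq> V" using e by (auto simp: d_def)
    ultimately show ?thesis by blast
  next
    case 2
    with e show ?thesis by (auto simp: local_base_mem)
  next
    case 3
    have "p = (fst p, 0)" using p 3 by (simp add: prod_eq_iff Xn_eq_Pn_Un_Ln Ln_def)
    then have "ball (fst p, e / 2) (e / 2) \<subseteq> ball p e"
      using tangent_ball_subset_ball[of "e / 2" "fst p"] e by simp
    moreover have "ball (fst p, e / 2) (e / 2) \<subseteq> Xn"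
      using tangent_ball_subset_Pn Pn_subset_Xn by blast
    ultimately have "insert p (ball (fst p, e / 2) (e / 2)) \<subseteq> V \<inter> Xn" using e p by blast
    moreover have "insert p (ball (fst p, e / 2) (e / 2)) \<in> local_base B p"
      using 3 e by (auto simp: local_base_not_mem)
    ultimately show ?thesis by blast
  qed
qed simp

lemma topspace_tau: "topspace (tau B) = Xn"
proof -
  have "Xn \<subseteq> topspace (tau B)"
    using openin_tau_Int_Xn[of UNIV B] by (simp add: openin_subset)
  moreover have "topspace (tau B) \<subseteq> Xn"
    using openin_tau[of B "topspace (tau B)"] by simp
  ultimately show ?thesis by blast
qed

lemma closedin_tau_Int_Xn:
  assumes "closed C" shows "closedin (tau B) (C \<inter> Xn)"
proof -
  have "Xn - C \<inter> Xn = - C \<inter> Xn" by blast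
  then show ?thesis
    using openin_tau_Int_Xn[of "- C" B] assms by (simp add: closedin_def topspace_tau open_Compl)
qed

lemma fsigma_in_tau_open_Int_Xn:
  fixes V :: "((real^'m) \<times> real) set"
  assumes "open V" shows "fsigma_in (tau B) (V \<inter> Xn)"
proof -
  have "fsigma_in euclidean V"
    using assms by (simp add: open_imp_fsigma_in metrizable_space_euclidean)
  then obtain C :: "nat \<Rightarrow> ((real^'m) \<times> real) set" where C: "\<And>n. closedin euclidean (C n)" "\<Union>(range C) = V"
    by (meson fsigma_in_ascending)
  have "fsigma_in (tau B) (\<Union>n. C n \<inter> Xn)"
  proof (rule fsigma_in_Union)
    fix S assume "S \<in> range (\<lambda>n. C n \<inter> Xn)"
    then obtain n where S: "S = C n \<inter> Xn" by blast
    have "closed (C n)" using C(1) by simp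
    then show "fsigma_in (tau B) S"
      unfolding S by (intro closed_imp_fsigma_in closedin_tau_Int_Xn)
  qed simp
  moreover have "(\<Union>n. C n \<inter> Xn) = V \<inter> Xn" using C(2) by blast
  ultimately show ?thesis by simp
qed

lemma openin_tau_insert_Pn:
  assumes "q \<in> Ln - B" shows "openin (tau B) (insert q Pn)"
  unfolding openin_tau
proof (intro conjI ballI)
  show "insert q Pn \<subseteq> Xn" using assms Pn_subset_Xn Ln_subset_Xn by blast
  fix p assume p: "p \<in> insert q Pn"
  show "\<exists>W\<in>local_base B p. W \<subseteq> insert q Pn"
  proof (cases "p \<in> Pn")
    case True
    then obtain W where "W \<in> local_base B p" "W \<subseteq> Pn"
      using local_base_Pn_ex_subset_Pn by blast
    then show ?thesis by blast
  next
    case False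
    with p have "p = q" by blast
    with assms have "p \<notin> B" by blast
    with False obtain W where "W \<in> local_base B p" "W \<subseteq> insert p Pn"
      using local_base_not_mem_ex_subset by blast
    with \<open>p = q\<close> show ?thesis by blast
  qed
qed

lemma closedin_tau_subset:
  assumes F: "closed F" "F \<subseteq> Ln - B" and S: "S \<subseteq> F"
  shows "closedin (tau B) S"
  unfolding closedin_def topspace_tau openin_tau
proof (intro conjI ballI)
  show "S \<subseteq> Xn" using F S Ln_subset_Xn by blast
  show "Xn - S \<subseteq> Xn" by blast
  fix p assume p: "p \<in> Xn - S"
  consider "p \<in> Pn" | "p \<notin> Pn" "p \<in> B" | "p \<notin> Pn" "p \<notin> B" by blast
  then show "\<exists>W\<in>local_base B p. W \<subseteq> Xn - S"
  proof cases
    case 1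
    then obtain W where "W \<in> local_base B p" "W \<subseteq> Pn"
      using local_base_Pn_ex_subset_Pn by blast
    moreover have "Pn \<subseteq> Xn - S" using Pn_subset_Xn Pn_Int_Ln F S by blast
    ultimately show ?thesis by blast
  next
    case 2
    then have "p \<in> - F" using F by blast
    with F obtain e where e: "0 < e" "ball p e \<subseteq> - F"
      by (meson open_Compl open_contains_ball)
    with 2 have "ball p e \<inter> Xn \<in> local_base B p" by (auto simp: local_base_mem)
    moreover have "ball p e \<inter> Xn \<subseteq> Xn - S" using e S by blast
    ultimately show ?thesis by blast
  next
    case 3
    then obtain W where "W \<in> local_base B p" "W \<subseteq> insert p Pn"
      using local_base_not_mem_ex_subset by blast
    moreover have "insert p Pn \<subseteq> Xn - S" using p Pn_subset_Xn Pn_Int_Ln F S by blast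
    ultimately show ?thesis by blast
  qed
qed

lemma openin_tau_imp_ball:
  assumes "openin (tau B) U" "p \<in> U" "p \<notin> Ln - B"
  obtains e where "0 < e" "ball p e \<inter> Xn \<subseteq> U"
proof -
  obtain W where W: "W \<in> local_base B p" "W \<subseteq> U"
    using assms(1,2) by (auto simp: openin_tau)
  have "p \<in> Xn" using assms(1,2) by (auto simp: openin_tau)
  then consider "p \<in> Pn" | "p \<notin> Pn" "p \<in> B"
    using assms(3) Xn_eq_Pn_Un_Ln by blast
  then show ?thesis
  proof cases
    case 1
    with W obtain e where "W = ball p e" "0 < e" "e < snd p" by (auto simp: local_base_Pn)
    with W(2) show ?thesis by (intro that[of e]) auto
  next
    case 2
    with W obtain e where "W = ball p e \<inter> Xn" "0 < e" by (auto simp: local_base_mem)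
    with W(2) show ?thesis by (intro that[of e]) auto
  qed
qed

lemma perfect_top_tau:
  assumes "fsigma_in euclidean (Ln - B)"
  shows "perfect_top (tau B)"
  unfolding perfect_top_def
proof (intro allI impI)
  obtain \<F> where \<F>: "countable \<F>" "\<And>F. F \<in> \<F> \<Longrightarrow> closed F" "\<Union>\<F> = Ln - B"
    using assms unfolding fsigma_in_def union_of_def closed_closedin by blast
  fix C assume C: "closedin (tau B) C"
  define U where "U = Xn - C"
  have U: "openin (tau B) U"
    using C by (simp add: U_def closedin_def topspace_tau)
  define V where "V = \<Union>{ball p e | p e. 0 < e \<and> ball p e \<inter> Xn \<subseteq> U}"
  have "open V" by (auto simp: V_def)
  have "U \<subseteq> (V \<inter> Xn) \<union> (\<Union>F\<in>\<F>. U \<inter> F)"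
  proof
    fix p assume p: "p \<in> U"
    show "p \<in> (V \<inter> Xn) \<union> (\<Union>F\<in>\<F>. U \<inter> F)"
    proof (cases "p \<in> Ln - B")
      case True
      with p \<F>(3) show ?thesis by blast
    next
      case False
      with U p obtain e where "0 < e" "ball p e \<inter> Xn \<subseteq> U" by (rule openin_tau_imp_ball)
      then have "ball p e \<in> {ball p e | p e. 0 < e \<and> ball p e \<inter> Xn \<subseteq> U}" by blast
      then have "p \<in> V" unfolding V_def using \<open>0 < e\<close> by (meson UnionI centre_in_ball)
      with p show ?thesis by (simp add: U_def)
    qed
  qed
  moreover have "V \<inter> Xn \<subseteq> U" by (auto simp: V_def)
  ultimately have "U = (V \<inter> Xn) \<union> (\<Union>F\<in>\<F>. U \<inter> F)" by blast
  moreover have "fsigma_in (tau B) (U \<inter> F)" if "F \<in> \<F>" for F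
    using \<F> that by (intro closed_imp_fsigma_in closedin_tau_subset[of F]) auto
  then have "fsigma_in (tau B) (\<Union>F\<in>\<F>. U \<inter> F)"
    using \<F>(1) by (intro fsigma_in_Union) auto
  ultimately have "fsigma_in (tau B) U"
    using fsigma_in_tau_open_Int_Xn[OF \<open>open V\<close>] by (metis fsigma_in_Un)
  then show "gdelta_in (tau B) C"
    using closedin_subset[OF C] by (simp add: gdelta_in_fsigma_in topspace_tau U_def)
qed

lemma not_Lindelof_space_tau:
  assumes "fsigma_in euclidean (Ln - B)" "uncountable (Ln - B)"
  shows "\<not> Lindelof_space (tau B)"
proof
  assume L: "Lindelof_space (tau B)"
  obtain \<F> where \<F>: "countable \<F>" "\<And>F. F \<in> \<F> \<Longrightarrow> closed F" "\<Union>\<F> = Ln - B"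
    using assms(1) unfolding fsigma_in_def union_of_def closed_closedin by blast
  have "countable F" if F: "F \<in> \<F>" for F
  proof (rule Lindelof_space_closed_discrete_countable[OF L])
    have "F \<subseteq> Ln - B" using F \<F>(3) by blast
    then show "closedin (tau B) F"
      using \<F>(2)[OF F] by (intro closedin_tau_subset[of F]) auto
    fix q assume "q \<in> F"
    with \<open>F \<subseteq> Ln - B\<close> have "openin (tau B) (insert q Pn)" "insert q Pn \<inter> F = {q}"
      using openin_tau_insert_Pn Pn_Int_Ln by blast+
    then show "\<exists>U. openin (tau B) U \<and> U \<inter> F = {q}" by blast
  qed
  then have "countable (\<Union>F\<in>\<F>. F)" using \<F>(1) by (intro countable_UN)
  with \<F>(3) assms(2) show False by simp
qed

lemma uncountable_Ln_diff_bounded: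
  fixes A :: "((real^'m) \<times> real) set"
  assumes "bounded A" shows "uncountable (Ln - A)"
proof
  assume Ln_diff_countable: "countable (Ln - A)"
  obtain R where R: "\<And>x. x \<in> A \<Longrightarrow> norm x \<le> R"
    using assms by (auto simp: bounded_iff)
  obtain v :: "real^'m" where v: "norm v = 1"
    using vector_choose_size[of 1] by auto
  define g :: "real \<Rightarrow> (real^'m) \<times> real" where "g t = (t *\<^sub>R v, 0)" for t
  define I where "I = {\<bar>R\<bar><..<\<bar>R\<bar> + 1}"
  have "g ` I \<subseteq> Ln - A"
  proof
    fix y assume "y \<in> g ` I"
    then obtain t where t: "\<bar>R\<bar> < t" "y = g t" by (auto simp: I_def)
    then have "norm y > R" using v by (simp add: g_def norm_Pair)
    then have "y \<notin> A" by (meson R leD)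
    then show "y \<in> Ln - A" using t by (simp add: g_def Ln_def)
  qed
  moreover have "inj_on g I"
    using v by (auto intro!: inj_onI simp: g_def scaleR_cancel_right)
  ultimately have "countable I"
    using Ln_diff_countable countable_subset countable_image_inj_on by metis
  moreover have "uncountable I"
    unfolding I_def by (simp add: uncountable_open_interval)
  ultimately show False by blast
qed

theorem mainTheorem17:
  fixes A :: "((real^'m) \<times> real) set"
  assumes "A \<subseteq> Ln" and "compact A" and "uncountable A"
  shows "perfect_top (tau A) \<and> \<not> Lindelof_space (tau A)
       \<and> perfect_top (tau (Ln - A)) \<and> \<not> Lindelof_space (tau (Ln - A))"
proof -
  have "closed A" using assms(2) by (rule compact_imp_closed)
  have "fsigma_in euclidean (Ln \<inter> - A)"
  proof (rule fsigma_in_Int)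
    show "fsigma_in euclidean Ln"
      using closed_Ln unfolding closed_closedin by (rule closed_imp_fsigma_in)
    have "open (- A)" using \<open>closed A\<close> by (rule open_Compl)
    then show "fsigma_in euclidean (- A)"
      by (meson metrizable_space_euclidean open_imp_fsigma_in open_openin)
  qed
  then have "fsigma_in euclidean (Ln - A)" by (simp add: Diff_eq)
  moreover have "uncountable (Ln - A)"
    using assms(2) by (intro uncountable_Ln_diff_bounded compact_imp_bounded)
  moreover have "Ln - (Ln - A) = A" using assms(1) by blast
  moreover have "fsigma_in euclidean A"
    using \<open>closed A\<close> unfolding closed_closedin by (rule closed_imp_fsigma_in)
  ultimately show ?thesis
    using assms(3) perfect_top_tau not_Lindelof_space_tau by metis
qed

end
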